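(* Let $\alpha_i,\beta_i,\gamma_i,\delta_i\in(0,\pi)$ satisfy $\alpha_i\pm\beta_i\pm\gamma_i\pm\delta_i\not\equiv0\pmod{2\pi}$ for all sign choices and $M_i>0$, for each $i=1,\dots,4$. Then for each $i$: \[\cos\alpha_i=\varepsilon_i\frac{1-y_iz_iu_i+x_iz_iu_i-x_iy_iu_i}{2\sqrt{x_iz_iu_i(1+y_i)(1+u_iy_i)}},\qquad \cos\gamma_i=\varepsilon_i\frac{1+y_iz_iu_i-x_iz_iu_i-x_iy_iu_i}{2\sqrt{y_iz_iu_i(1+x_i)(1+u_ix_i)}},\] \[\cos\delta_i=\varepsilon_i\frac{1-y_iz_iu_i-x_iz_iu_i+x_iy_iu_i}{2\sqrt{x_iy_iu_i(1+z_i)(1+u_iz_i)}},\qquad \cos\sigma_i=\frac{1-u_i(x_iy_i+x_iz_i+y_iz_i+2x_iy_iz_i)}{2\sqrt{x_iy_iz_iu_i^2(1+x_i)(1+y_i)(1+z_i)}},\] \[\cos\beta_i=\varepsilon_i\frac{u_i(1+x_i)(1+y_i)(1+z_i)+(1+u_ix_i)(1+u_iy_i)(1+u_iz_i)-u_ix_iy_iz_i(u_i-1)^2}{2\sqrt{u_i(1+x_i)(1+y_i)(1+z_i)(1+u_ix_i)(1+u_iy_i)(1+u_iz_i)}}.\]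
   Context: $\sigma_i=(\alpha_i+\beta_i+\gamma_i+\delta_i)/2$, $\varepsilon_i=\operatorname{sign}(\sin\sigma_i)$, $\overline{\alpha}_i=\sigma_i-\alpha_i$, $\overline{\beta}_i=\sigma_i-\beta_i$, $\overline{\gamma}_i=\sigma_i-\gamma_i$, $\overline{\delta}_i=\sigma_i-\delta_i$; $a_i=\sin\alpha_i/\sin\overline{\alpha}_i$, $b_i=\sin\beta_i/\sin\overline{\beta}_i$, $c_i=\sin\gamma_i/\sin\overline{\gamma}_i$, $d_i=\sin\delta_i/\sin\overline{\delta}_i$, $M_i=a_ib_ic_id_i$, $r_i=a_id_i$, $s_i=c_id_i$, $f_i=a_ic_i$, $u_i=1-M_i$, $x_i=1/(r_i-1)$, $y_i=1/(s_i-1)$, $z_i=1/(f_i-1)$. *)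

theory Defs
  imports Complex_Main
begin

definition sig :: "real \<Rightarrow> real \<Rightarrow> real \<Rightarrow> real \<Rightarrow> real" where
  "sig al be ga de = (al + be + ga + de) / 2"

definition eps :: "real \<Rightarrow> real \<Rightarrow> real \<Rightarrow> real \<Rightarrow> real" where
  "eps al be ga de = sgn (sin (sig al be ga de))"

definition qa :: "real \<Rightarrow> real \<Rightarrow> real \<Rightarrow> real \<Rightarrow> real" where
  "qa al be ga de = sin al / sin (sig al be ga de - al)"
definition qb :: "real \<Rightarrow> real \<Rightarrow> real \<Rightarrow> real \<Rightarrow> real" where
  "qb al be ga de = sin be / sin (sig al be ga de - be)"
definition qc :: "real \<Rightarrow> real \<Rightarrow> real \<Rightarrow> real \<Rightarrow> real" where
  "qc al be ga de = sin ga / sin (sig al be ga de - ga)"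
definition qd :: "real \<Rightarrow> real \<Rightarrow> real \<Rightarrow> real \<Rightarrow> real" where
  "qd al be ga de = sin de / sin (sig al be ga de - de)"

definition qM :: "real \<Rightarrow> real \<Rightarrow> real \<Rightarrow> real \<Rightarrow> real" where
  "qM al be ga de = qa al be ga de * qb al be ga de * qc al be ga de * qd al be ga de"
definition qr :: "real \<Rightarrow> real \<Rightarrow> real \<Rightarrow> real \<Rightarrow> real" where
  "qr al be ga de = qa al be ga de * qd al be ga de"
definition qs :: "real \<Rightarrow> real \<Rightarrow> real \<Rightarrow> real \<Rightarrow> real" where
  "qs al be ga de = qc al be ga de * qd al be ga de"
definition qf :: "real \<Rightarrow> real \<Rightarrow> real \<Rightarrow> real \<Rightarrow> real" where
  "qf al be ga de = qa al be ga de * qc al be ga de"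
definition qu :: "real \<Rightarrow> real \<Rightarrow> real \<Rightarrow> real \<Rightarrow> real" where
  "qu al be ga de = 1 - qM al be ga de"
definition qx :: "real \<Rightarrow> real \<Rightarrow> real \<Rightarrow> real \<Rightarrow> real" where
  "qx al be ga de = 1 / (qr al be ga de - 1)"
definition qy :: "real \<Rightarrow> real \<Rightarrow> real \<Rightarrow> real \<Rightarrow> real" where
  "qy al be ga de = 1 / (qs al be ga de - 1)"
definition qz :: "real \<Rightarrow> real \<Rightarrow> real \<Rightarrow> real \<Rightarrow> real" where
  "qz al be ga de = 1 / (qf al be ga de - 1)"

definition nondeg :: "real \<Rightarrow> real \<Rightarrow> real \<Rightarrow> real \<Rightarrow> bool" where
  "nondeg al be ga de \<longleftrightarrow>
     (\<forall>s1 s2 s3 :: real. s1 \<in> {1, -1} \<longrightarrow> s2 \<in> {1, -1} \<longrightarrow> s3 \<in> {1, -1} \<longrightarrow>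
        (\<forall>k :: int. al + s1 * be + s2 * ga + s3 * de \<noteq> 2 * pi * of_int k))"

end

theory Submission
  imports Defs
begin

(* Write \<sigma> for the half-sum of the angles. By product-to-sum identities, x, y, z, u, the
   factors 1 + x, 1 + u x, ... and the products x z u, x y z u, ... are quotients of sines of \<sigma>,
   of \<sigma> - \<alpha>, ..., \<sigma> - \<delta>, and of \<sigma> - \<alpha> - \<delta>, \<sigma> - \<gamma> - \<delta>, \<sigma> - \<alpha> - \<gamma>. In these terms each
   radicand of the statement is the square of a quotient q = k / sin \<sigma> (q = k / (sin \<sigma>)^2 for
   cos \<sigma>) with k > 0, and the matching numerator is 2 q times the cosine in question. So the
   square root is \<bar>q\<bar> and only the sign of sin \<sigma> survives, as \<epsilon>. The positivity of k comes
   from the angles lying in (0, \<pi>) and from M > 0, which forces the sines of \<sigma> - \<alpha>, ..., \<sigma> - \<delta>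
   to be positive; nondegeneracy keeps the remaining sines nonzero. *)

lemma sin_mult_sin_eq_diff:
  fixes s x y :: real
  shows "sin x * sin y = sin (s - x) * sin (s - y) - sin s * sin (s - x - y)"
proof -
  have "sin s ^ 2 + cos s ^ 2 = 1" by simp
  then show ?thesis unfolding sin_diff cos_diff by algebra
qed

lemma sin_square_add_sin_square_diff:
  fixes s b :: real
  shows "sin s ^ 2 + sin (s - b) ^ 2 - sin b ^ 2 = 2 * cos b * sin s * sin (s - b)"
proof -
  have "sin b ^ 2 + cos b ^ 2 = 1" "sin s ^ 2 + cos s ^ 2 = 1" by simp_all
  then show ?thesis unfolding sin_diff cos_diff by algebra
qed

lemma sin_ratio_mult_sin_ratio_sub_one:
  fixes s x y :: real
  assumes "sin (s - x) \<noteq> 0" "sin (s - y) \<noteq> 0"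
  shows "sin x / sin (s - x) * (sin y / sin (s - y)) - 1
           = - sin s * sin (s - x - y) / (sin (s - x) * sin (s - y))"
proof -
  have "sin x / sin (s - x) * (sin y / sin (s - y)) - 1
          = (sin x * sin y - sin (s - x) * sin (s - y)) / (sin (s - x) * sin (s - y))"
    using assms by (simp add: field_simps)
  also have "\<dots> = - sin s * sin (s - x - y) / (sin (s - x) * sin (s - y))"
    by (simp add: sin_mult_sin_eq_diff[of x y s])
  finally show ?thesis .
qed

lemma sin_half_ne_zero:
  fixes t :: real
  assumes "\<forall>k::int. t \<noteq> 2 * pi * of_int k"
  shows "sin (t / 2) \<noteq> 0"
proof
  assume "sin (t / 2) = 0"
  then obtain k :: int where "t / 2 = of_int k * pi"
    by (auto simp: sin_zero_iff_int2)
  then have "t = 2 * pi * of_int k" by simp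
  with assms show False by blast
qed

lemma sgn_mult_div_sqrt_square:
  fixes c k s :: real
  assumes "0 < k" "s \<noteq> 0"
  shows "sgn s * (2 * c * k / s) / (2 * sqrt ((k / s)^2)) = c"
proof -
  have "sqrt ((k / s)^2) = k / \<bar>s\<bar>"
    using assms by (simp only: real_sqrt_abs) (simp add: abs_divide)
  then show ?thesis
    using assms by (simp add: sgn_if)
qed

lemma mult4_pos_imp_factors_pos:
  fixes a b c d :: real
  assumes "0 < a * b * c * d"
    and "0 < a \<or> 0 < b" "0 < a \<or> 0 < c" "0 < a \<or> 0 < d"
    and "0 < b \<or> 0 < c" "0 < b \<or> 0 < d" "0 < c \<or> 0 < d"
  shows "0 < a \<and> 0 < b \<and> 0 < c \<and> 0 < d"
proof -
  have first_pos: "0 < p"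
    if "0 < p * (q * r * s)" "0 < p \<or> 0 < q" "0 < p \<or> 0 < r" "0 < p \<or> 0 < s"
    for p q r s :: real
  proof (rule ccontr)
    assume "\<not> 0 < p"
    with that(2-4) have "p \<le> 0" "0 < q * r * s" by auto
    then have "p * (q * r * s) \<le> 0" by (simp add: mult_nonpos_nonneg)
    with that(1) show False by simp
  qed
  have "0 < a"
    using first_pos[of a b c d] assms(1-4) by (simp add: ac_simps)
  moreover have "0 < b"
    using first_pos[of b a c d] assms(1,2,5,6) by (simp add: ac_simps disj_commute)
  moreover have "0 < c"
    using first_pos[of c a b d] assms(1,3,5,7) by (simp add: ac_simps disj_commute)
  moreover have "0 < d"
    using first_pos[of d a b c] assms(1,4,6,7) by (simp add: ac_simps disj_commute)
  ultimately show ?thesis by blast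
qed

lemma sig_trig_identities:
  fixes \<alpha> \<beta> \<gamma> \<delta> :: real
  defines "\<sigma> \<equiv> sig \<alpha> \<beta> \<gamma> \<delta>"
  shows "sin (\<sigma> - \<beta>) * sin (\<sigma> - \<gamma>) + sin (\<sigma> - \<gamma> - \<delta>) * sin (\<sigma> - \<alpha> - \<gamma>)
           = sin \<alpha> * sin \<delta>" (is ?I1)
    and "sin (\<sigma> - \<alpha>) * sin (\<sigma> - \<beta>) + sin (\<sigma> - \<alpha> - \<delta>) * sin (\<sigma> - \<alpha> - \<gamma>)
           = sin \<gamma> * sin \<delta>" (is ?I2)
    and "sin (\<sigma> - \<beta>) * sin (\<sigma> - \<delta>) + sin (\<sigma> - \<alpha> - \<delta>) * sin (\<sigma> - \<gamma> - \<delta>)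
           = sin \<alpha> * sin \<gamma>" (is ?I3)
    and "sin (\<sigma> - \<alpha>) * sin (\<sigma> - \<beta>) * sin (\<sigma> - \<gamma>) * sin (\<sigma> - \<delta>)
             - sin \<alpha> * sin \<beta> * sin \<gamma> * sin \<delta>
           = - sin \<sigma> * sin (\<sigma> - \<alpha> - \<delta>) * sin (\<sigma> - \<gamma> - \<delta>) * sin (\<sigma> - \<alpha> - \<gamma>)" (is ?I4)
    and "sin \<sigma> * sin (\<sigma> - \<beta>) + sin (\<sigma> - \<gamma>) * sin (\<sigma> - \<alpha> - \<delta>)
             - sin (\<sigma> - \<alpha>) * sin (\<sigma> - \<gamma> - \<delta>) + sin (\<sigma> - \<delta>) * sin (\<sigma> - \<alpha> - \<gamma>)
           = 2 * cos \<alpha> * sin \<gamma> * sin \<delta>" (is ?I5)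
    and "sin \<sigma> * sin (\<sigma> - \<beta>) - sin (\<sigma> - \<gamma>) * sin (\<sigma> - \<alpha> - \<delta>)
             + sin (\<sigma> - \<alpha>) * sin (\<sigma> - \<gamma> - \<delta>) + sin (\<sigma> - \<delta>) * sin (\<sigma> - \<alpha> - \<gamma>)
           = 2 * cos \<gamma> * sin \<alpha> * sin \<delta>" (is ?I6)
    and "sin \<sigma> * sin (\<sigma> - \<beta>) + sin (\<sigma> - \<gamma>) * sin (\<sigma> - \<alpha> - \<delta>)
             + sin (\<sigma> - \<alpha>) * sin (\<sigma> - \<gamma> - \<delta>) - sin (\<sigma> - \<delta>) * sin (\<sigma> - \<alpha> - \<gamma>)
           = 2 * cos \<delta> * sin \<alpha> * sin \<gamma>" (is ?I7)
    and "sin \<sigma> * (sin \<sigma> * sin (\<sigma> - \<beta>) + sin (\<sigma> - \<gamma>) * sin (\<sigma> - \<alpha> - \<delta>)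
               + sin (\<sigma> - \<alpha>) * sin (\<sigma> - \<gamma> - \<delta>) + sin (\<sigma> - \<delta>) * sin (\<sigma> - \<alpha> - \<gamma>))
             - 2 * sin (\<sigma> - \<alpha>) * sin (\<sigma> - \<gamma>) * sin (\<sigma> - \<delta>)
           = 2 * cos \<sigma> * sin \<alpha> * sin \<gamma> * sin \<delta>" (is ?I8)
proof -
  obtain a b c d where halves: "\<alpha> = 2 * a" "\<beta> = 2 * b" "\<gamma> = 2 * c" "\<delta> = 2 * d"
    by (metis field_sum_of_halves mult_2)
  then have "\<sigma> = a + b + c + d"
    by (simp add: \<sigma>_def sig_def)
  note expand = this halves mult_2 sin_add cos_add sin_diff cos_diff
  have "sin a ^ 2 + cos a ^ 2 = 1" "sin b ^ 2 + cos b ^ 2 = 1" "sin c ^ 2 + cos c ^ 2 = 1"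
    "sin d ^ 2 + cos d ^ 2 = 1"
    by simp_all
  then show ?I1 ?I2 ?I3 ?I4 ?I5 ?I6 ?I7 ?I8
    unfolding expand by algebra+
qed

lemma nondeg_imp_sin_ne_zero:
  fixes \<alpha> \<beta> \<gamma> \<delta> :: real
  assumes "nondeg \<alpha> \<beta> \<gamma> \<delta>"
  defines "\<sigma> \<equiv> sig \<alpha> \<beta> \<gamma> \<delta>"
  shows "sin \<sigma> \<noteq> 0" "sin (\<sigma> - \<alpha> - \<delta>) \<noteq> 0" "sin (\<sigma> - \<gamma> - \<delta>) \<noteq> 0" "sin (\<sigma> - \<alpha> - \<gamma>) \<noteq> 0"
proof -
  have nd: "sin ((\<alpha> + s1 * \<beta> + s2 * \<gamma> + s3 * \<delta>) / 2) \<noteq> 0"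
    if "s1 \<in> {1, -1}" "s2 \<in> {1, -1}" "s3 \<in> {1, -1}" for s1 s2 s3 :: real
    using assms(1) that unfolding nondeg_def by (intro sin_half_ne_zero) blast
  have "\<sigma> = (\<alpha> + 1 * \<beta> + 1 * \<gamma> + 1 * \<delta>) / 2"
    by (simp add: \<sigma>_def sig_def)
  then show "sin \<sigma> \<noteq> 0"
    by (simp only:) (rule nd; simp)
  have "\<sigma> - \<alpha> - \<delta> = - ((\<alpha> + (-1) * \<beta> + (-1) * \<gamma> + 1 * \<delta>) / 2)"
    by (simp add: \<sigma>_def sig_def field_simps)
  then show "sin (\<sigma> - \<alpha> - \<delta>) \<noteq> 0"
    by (simp only: sin_minus neg_equal_0_iff_equal) (rule nd; simp)
  have "\<sigma> - \<gamma> - \<delta> = (\<alpha> + 1 * \<beta> + (-1) * \<gamma> + (-1) * \<delta>) / 2"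
    by (simp add: \<sigma>_def sig_def field_simps)
  then show "sin (\<sigma> - \<gamma> - \<delta>) \<noteq> 0"
    by (simp only:) (rule nd; simp)
  have "\<sigma> - \<alpha> - \<gamma> = - ((\<alpha> + (-1) * \<beta> + 1 * \<gamma> + (-1) * \<delta>) / 2)"
    by (simp add: \<sigma>_def sig_def field_simps)
  then show "sin (\<sigma> - \<alpha> - \<gamma>) \<noteq> 0"
    by (simp only: sin_minus neg_equal_0_iff_equal) (rule nd; simp)
qed

lemma qM_pos_imp_sin_sig_diff_pos:
  fixes \<alpha> \<beta> \<gamma> \<delta> :: real
  assumes "\<alpha> \<in> {0<..<pi}" "\<beta> \<in> {0<..<pi}" "\<gamma> \<in> {0<..<pi}" "\<delta> \<in> {0<..<pi}"
    and "0 < qM \<alpha> \<beta> \<gamma> \<delta>"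
  defines "\<sigma> \<equiv> sig \<alpha> \<beta> \<gamma> \<delta>"
  shows "0 < sin (\<sigma> - \<alpha>) \<and> 0 < sin (\<sigma> - \<beta>) \<and> 0 < sin (\<sigma> - \<gamma>) \<and> 0 < sin (\<sigma> - \<delta>)"
proof (rule mult4_pos_imp_factors_pos)
  have "0 < sin \<alpha> * sin \<beta> * sin \<gamma> * sin \<delta>"
    using assms(1-4) by (simp add: sin_gt_zero)
  moreover have "qM \<alpha> \<beta> \<gamma> \<delta> = sin \<alpha> * sin \<beta> * sin \<gamma> * sin \<delta>
      / (sin (\<sigma> - \<alpha>) * sin (\<sigma> - \<beta>) * sin (\<sigma> - \<gamma>) * sin (\<sigma> - \<delta>))"
    by (simp add: \<sigma>_def qM_def qa_def qb_def qc_def qd_def)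
  ultimately show "0 < sin (\<sigma> - \<alpha>) * sin (\<sigma> - \<beta>) * sin (\<sigma> - \<gamma>) * sin (\<sigma> - \<delta>)"
    using assms(5) by (simp add: zero_less_divide_iff)
  \<comment> \<open>Any two of \<sigma> - \<alpha>, ..., \<sigma> - \<delta> have their sum in (0, 2\<pi>) and their difference in
     (-\<pi>, \<pi>), so at most one of the four sines is nonpositive.\<close>
  have pair: "0 < sin t \<or> 0 < sin t'"
    if "0 < t + t'" "t + t' < 2 * pi" "t - t' < pi" "t' - t < pi" for t t' :: real
  proof (rule ccontr)
    assume "\<not> (0 < sin t \<or> 0 < sin t')"
    then have "t \<le> 0 \<or> pi \<le> t" "t' \<le> 0 \<or> pi \<le> t'"
      using sin_gt_zero[of t] sin_gt_zero[of t'] by force+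
    with that show False by linarith
  qed
  have \<sigma>: "2 * \<sigma> = \<alpha> + \<beta> + \<gamma> + \<delta>"
    by (simp add: \<sigma>_def sig_def)
  have ranges: "0 < \<alpha>" "\<alpha> < pi" "0 < \<beta>" "\<beta> < pi" "0 < \<gamma>" "\<gamma> < pi" "0 < \<delta>" "\<delta> < pi"
    using assms(1-4) by simp_all
  show "0 < sin (\<sigma> - \<alpha>) \<or> 0 < sin (\<sigma> - \<beta>)" "0 < sin (\<sigma> - \<alpha>) \<or> 0 < sin (\<sigma> - \<gamma>)"
    "0 < sin (\<sigma> - \<alpha>) \<or> 0 < sin (\<sigma> - \<delta>)" "0 < sin (\<sigma> - \<beta>) \<or> 0 < sin (\<sigma> - \<gamma>)"
    "0 < sin (\<sigma> - \<beta>) \<or> 0 < sin (\<sigma> - \<delta>)" "0 < sin (\<sigma> - \<gamma>) \<or> 0 < sin (\<sigma> - \<delta>)"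
    by (rule pair; use ranges \<sigma> in linarith)+
qed

locale angle_quadruple =
  fixes \<alpha> \<beta> \<gamma> \<delta> :: real
  assumes sin_pos: "0 < sin \<alpha>" "0 < sin \<beta>" "0 < sin \<gamma>" "0 < sin \<delta>"
    and sin_sig_diff_pos:
      "0 < sin (sig \<alpha> \<beta> \<gamma> \<delta> - \<alpha>)" "0 < sin (sig \<alpha> \<beta> \<gamma> \<delta> - \<beta>)"
      "0 < sin (sig \<alpha> \<beta> \<gamma> \<delta> - \<gamma>)" "0 < sin (sig \<alpha> \<beta> \<gamma> \<delta> - \<delta>)"
    and sin_sig_ne_zero: "sin (sig \<alpha> \<beta> \<gamma> \<delta>) \<noteq> 0"
    and sin_sig_diff2_ne_zero:
      "sin (sig \<alpha> \<beta> \<gamma> \<delta> - \<alpha> - \<delta>) \<noteq> 0" "sin (sig \<alpha> \<beta> \<gamma> \<delta> - \<gamma> - \<delta>) \<noteq> 0"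
      "sin (sig \<alpha> \<beta> \<gamma> \<delta> - \<alpha> - \<gamma>) \<noteq> 0"
begin

abbreviation "\<sigma> \<equiv> sig \<alpha> \<beta> \<gamma> \<delta>"
abbreviation "e \<equiv> eps \<alpha> \<beta> \<gamma> \<delta>"
abbreviation "x \<equiv> qx \<alpha> \<beta> \<gamma> \<delta>"
abbreviation "y \<equiv> qy \<alpha> \<beta> \<gamma> \<delta>"
abbreviation "z \<equiv> qz \<alpha> \<beta> \<gamma> \<delta>"
abbreviation "u \<equiv> qu \<alpha> \<beta> \<gamma> \<delta>"

lemmas sin_ne_zero =
  sin_pos[THEN less_imp_neq, symmetric] sin_sig_diff_pos[THEN less_imp_neq, symmetric]
  sin_sig_ne_zero sin_sig_diff2_ne_zero

lemma qx_eq: "x = - sin (\<sigma> - \<alpha>) * sin (\<sigma> - \<delta>) / (sin \<sigma> * sin (\<sigma> - \<alpha> - \<delta>))"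
  using sin_ratio_mult_sin_ratio_sub_one[of \<sigma> \<alpha> \<delta>] sin_ne_zero
  by (simp add: qx_def qr_def qa_def qd_def)

lemma qy_eq: "y = - sin (\<sigma> - \<gamma>) * sin (\<sigma> - \<delta>) / (sin \<sigma> * sin (\<sigma> - \<gamma> - \<delta>))"
  using sin_ratio_mult_sin_ratio_sub_one[of \<sigma> \<gamma> \<delta>] sin_ne_zero
  by (simp add: qy_def qs_def qc_def qd_def)

lemma qz_eq: "z = - sin (\<sigma> - \<alpha>) * sin (\<sigma> - \<gamma>) / (sin \<sigma> * sin (\<sigma> - \<alpha> - \<gamma>))"
  using sin_ratio_mult_sin_ratio_sub_one[of \<sigma> \<alpha> \<gamma>] sin_ne_zero
  by (simp add: qz_def qf_def qa_def qc_def)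

lemma qu_eq:
  "u = - sin \<sigma> * sin (\<sigma> - \<alpha> - \<delta>) * sin (\<sigma> - \<gamma> - \<delta>) * sin (\<sigma> - \<alpha> - \<gamma>)
         / (sin (\<sigma> - \<alpha>) * sin (\<sigma> - \<beta>) * sin (\<sigma> - \<gamma>) * sin (\<sigma> - \<delta>))"
proof -
  have "u = (sin (\<sigma> - \<alpha>) * sin (\<sigma> - \<beta>) * sin (\<sigma> - \<gamma>) * sin (\<sigma> - \<delta>)
              - sin \<alpha> * sin \<beta> * sin \<gamma> * sin \<delta>)
         / (sin (\<sigma> - \<alpha>) * sin (\<sigma> - \<beta>) * sin (\<sigma> - \<gamma>) * sin (\<sigma> - \<delta>))"
    using sin_ne_zero by (simp add: qu_def qM_def qa_def qb_def qc_def qd_def field_simps)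
  then show ?thesis by (simp only: sig_trig_identities(4))
qed

lemma qu_sub_one:
  "u - 1 = - sin \<alpha> * sin \<beta> * sin \<gamma> * sin \<delta>
             / (sin (\<sigma> - \<alpha>) * sin (\<sigma> - \<beta>) * sin (\<sigma> - \<gamma>) * sin (\<sigma> - \<delta>))"
  by (simp add: qu_def qM_def qa_def qb_def qc_def qd_def)

lemma one_plus_qx: "1 + x = - sin \<alpha> * sin \<delta> / (sin \<sigma> * sin (\<sigma> - \<alpha> - \<delta>))"
proof -
  have "1 + x = (sin \<sigma> * sin (\<sigma> - \<alpha> - \<delta>) - sin (\<sigma> - \<alpha>) * sin (\<sigma> - \<delta>))
                / (sin \<sigma> * sin (\<sigma> - \<alpha> - \<delta>))"
    using sin_ne_zero by (simp add: qx_eq field_simps)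
  also have "\<dots> = - sin \<alpha> * sin \<delta> / (sin \<sigma> * sin (\<sigma> - \<alpha> - \<delta>))"
    by (simp add: sin_mult_sin_eq_diff[of \<alpha> \<delta> \<sigma>])
  finally show ?thesis .
qed

lemma one_plus_qy: "1 + y = - sin \<gamma> * sin \<delta> / (sin \<sigma> * sin (\<sigma> - \<gamma> - \<delta>))"
proof -
  have "1 + y = (sin \<sigma> * sin (\<sigma> - \<gamma> - \<delta>) - sin (\<sigma> - \<gamma>) * sin (\<sigma> - \<delta>))
                / (sin \<sigma> * sin (\<sigma> - \<gamma> - \<delta>))"
    using sin_ne_zero by (simp add: qy_eq field_simps)
  also have "\<dots> = - sin \<gamma> * sin \<delta> / (sin \<sigma> * sin (\<sigma> - \<gamma> - \<delta>))"
    by (simp add: sin_mult_sin_eq_diff[of \<gamma> \<delta> \<sigma>])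
  finally show ?thesis .
qed

lemma one_plus_qz: "1 + z = - sin \<alpha> * sin \<gamma> / (sin \<sigma> * sin (\<sigma> - \<alpha> - \<gamma>))"
proof -
  have "1 + z = (sin \<sigma> * sin (\<sigma> - \<alpha> - \<gamma>) - sin (\<sigma> - \<alpha>) * sin (\<sigma> - \<gamma>))
                / (sin \<sigma> * sin (\<sigma> - \<alpha> - \<gamma>))"
    using sin_ne_zero by (simp add: qz_eq field_simps)
  also have "\<dots> = - sin \<alpha> * sin \<gamma> / (sin \<sigma> * sin (\<sigma> - \<alpha> - \<gamma>))"
    by (simp add: sin_mult_sin_eq_diff[of \<alpha> \<gamma> \<sigma>])
  finally show ?thesis .
qed

lemma one_plus_qu_qx: "1 + u * x = sin \<alpha> * sin \<delta> / (sin (\<sigma> - \<beta>) * sin (\<sigma> - \<gamma>))"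
proof -
  have "1 + u * x = (sin (\<sigma> - \<beta>) * sin (\<sigma> - \<gamma>) + sin (\<sigma> - \<gamma> - \<delta>) * sin (\<sigma> - \<alpha> - \<gamma>))
                    / (sin (\<sigma> - \<beta>) * sin (\<sigma> - \<gamma>))"
    using sin_ne_zero by (simp add: qu_eq qx_eq field_simps)
  then show ?thesis by (simp only: sig_trig_identities(1))
qed

lemma one_plus_qu_qy: "1 + u * y = sin \<gamma> * sin \<delta> / (sin (\<sigma> - \<alpha>) * sin (\<sigma> - \<beta>))"
proof -
  have "1 + u * y = (sin (\<sigma> - \<alpha>) * sin (\<sigma> - \<beta>) + sin (\<sigma> - \<alpha> - \<delta>) * sin (\<sigma> - \<alpha> - \<gamma>))
                    / (sin (\<sigma> - \<alpha>) * sin (\<sigma> - \<beta>))"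
    using sin_ne_zero by (simp add: qu_eq qy_eq field_simps)
  then show ?thesis by (simp only: sig_trig_identities(2))
qed

lemma one_plus_qu_qz: "1 + u * z = sin \<alpha> * sin \<gamma> / (sin (\<sigma> - \<beta>) * sin (\<sigma> - \<delta>))"
proof -
  have "1 + u * z = (sin (\<sigma> - \<beta>) * sin (\<sigma> - \<delta>) + sin (\<sigma> - \<alpha> - \<delta>) * sin (\<sigma> - \<gamma> - \<delta>))
                    / (sin (\<sigma> - \<beta>) * sin (\<sigma> - \<delta>))"
    using sin_ne_zero by (simp add: qu_eq qz_eq field_simps)
  then show ?thesis by (simp only: sig_trig_identities(3))
qed

lemma qx_qz_qu: "x * z * u = - sin (\<sigma> - \<alpha>) * sin (\<sigma> - \<gamma> - \<delta>) / (sin \<sigma> * sin (\<sigma> - \<beta>))"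
  using sin_ne_zero by (simp add: qx_eq qz_eq qu_eq field_simps)

lemma qy_qz_qu: "y * z * u = - sin (\<sigma> - \<gamma>) * sin (\<sigma> - \<alpha> - \<delta>) / (sin \<sigma> * sin (\<sigma> - \<beta>))"
  using sin_ne_zero by (simp add: qy_eq qz_eq qu_eq field_simps)

lemma qx_qy_qu: "x * y * u = - sin (\<sigma> - \<delta>) * sin (\<sigma> - \<alpha> - \<gamma>) / (sin \<sigma> * sin (\<sigma> - \<beta>))"
  using sin_ne_zero by (simp add: qx_eq qy_eq qu_eq field_simps)

lemma qx_qy_qz_qu:
  "x * y * z * u = sin (\<sigma> - \<alpha>) * sin (\<sigma> - \<gamma>) * sin (\<sigma> - \<delta>) / (sin \<sigma> ^ 2 * sin (\<sigma> - \<beta>))"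
  using sin_ne_zero by (simp add: qx_eq qy_eq qz_eq qu_eq field_simps power2_eq_square)

lemma qu_mult_one_plus:
  "u * (1 + x) * (1 + y) * (1 + z) = (sin \<alpha> * sin \<gamma> * sin \<delta>)^2
     / (sin \<sigma> ^ 2 * (sin (\<sigma> - \<alpha>) * sin (\<sigma> - \<beta>) * sin (\<sigma> - \<gamma>) * sin (\<sigma> - \<delta>)))"
  using sin_ne_zero
  by (simp add: qu_eq one_plus_qx one_plus_qy one_plus_qz field_simps power2_eq_square)

lemma one_plus_qu_mult:
  "(1 + u * x) * (1 + u * y) * (1 + u * z) = (sin \<alpha> * sin \<gamma> * sin \<delta>)^2
     / (sin (\<sigma> - \<beta>) ^ 2 * (sin (\<sigma> - \<alpha>) * sin (\<sigma> - \<beta>) * sin (\<sigma> - \<gamma>) * sin (\<sigma> - \<delta>)))"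
  using sin_ne_zero
  by (simp add: one_plus_qu_qx one_plus_qu_qy one_plus_qu_qz field_simps power2_eq_square)

lemma cos_alpha_eq:
  "cos \<alpha> = e * (1 - y*z*u + x*z*u - x*y*u) / (2 * sqrt (x*z*u*(1+y)*(1+u*y)))"
proof -
  have num: "1 - y*z*u + x*z*u - x*y*u = 2 * cos \<alpha> * (sin \<gamma> * sin \<delta> / sin (\<sigma> - \<beta>)) / sin \<sigma>"
  proof -
    have "1 - y*z*u + x*z*u - x*y*u
        = (sin \<sigma> * sin (\<sigma> - \<beta>) + sin (\<sigma> - \<gamma>) * sin (\<sigma> - \<alpha> - \<delta>)
             - sin (\<sigma> - \<alpha>) * sin (\<sigma> - \<gamma> - \<delta>) + sin (\<sigma> - \<delta>) * sin (\<sigma> - \<alpha> - \<gamma>))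
          / (sin \<sigma> * sin (\<sigma> - \<beta>))"
      unfolding qx_qz_qu qy_qz_qu qx_qy_qu using sin_ne_zero by (simp add: field_simps)
    then show ?thesis
      by (simp only: sig_trig_identities(5)) (simp add: field_simps)
  qed
  have rad: "x*z*u*(1+y)*(1+u*y) = (sin \<gamma> * sin \<delta> / sin (\<sigma> - \<beta>) / sin \<sigma>)^2"
    unfolding qx_qz_qu one_plus_qy one_plus_qu_qy
    using sin_ne_zero by (simp add: field_simps power2_eq_square)
  show ?thesis unfolding num rad eps_def
    by (rule sgn_mult_div_sqrt_square[symmetric]) (use sin_pos sin_sig_diff_pos sin_ne_zero in auto)
qed

lemma cos_gamma_eq:
  "cos \<gamma> = e * (1 + y*z*u - x*z*u - x*y*u) / (2 * sqrt (y*z*u*(1+x)*(1+u*x)))"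
proof -
  have num: "1 + y*z*u - x*z*u - x*y*u = 2 * cos \<gamma> * (sin \<alpha> * sin \<delta> / sin (\<sigma> - \<beta>)) / sin \<sigma>"
  proof -
    have "1 + y*z*u - x*z*u - x*y*u
        = (sin \<sigma> * sin (\<sigma> - \<beta>) - sin (\<sigma> - \<gamma>) * sin (\<sigma> - \<alpha> - \<delta>)
             + sin (\<sigma> - \<alpha>) * sin (\<sigma> - \<gamma> - \<delta>) + sin (\<sigma> - \<delta>) * sin (\<sigma> - \<alpha> - \<gamma>))
          / (sin \<sigma> * sin (\<sigma> - \<beta>))"
      unfolding qx_qz_qu qy_qz_qu qx_qy_qu using sin_ne_zero by (simp add: field_simps)
    then show ?thesis
      by (simp only: sig_trig_identities(6)) (simp add: field_simps)
  qed
  have rad: "y*z*u*(1+x)*(1+u*x) = (sin \<alpha> * sin \<delta> / sin (\<sigma> - \<beta>) / sin \<sigma>)^2"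
    unfolding qy_qz_qu one_plus_qx one_plus_qu_qx
    using sin_ne_zero by (simp add: field_simps power2_eq_square)
  show ?thesis unfolding num rad eps_def
    by (rule sgn_mult_div_sqrt_square[symmetric]) (use sin_pos sin_sig_diff_pos sin_ne_zero in auto)
qed

lemma cos_delta_eq:
  "cos \<delta> = e * (1 - y*z*u - x*z*u + x*y*u) / (2 * sqrt (x*y*u*(1+z)*(1+u*z)))"
proof -
  have num: "1 - y*z*u - x*z*u + x*y*u = 2 * cos \<delta> * (sin \<alpha> * sin \<gamma> / sin (\<sigma> - \<beta>)) / sin \<sigma>"
  proof -
    have "1 - y*z*u - x*z*u + x*y*u
        = (sin \<sigma> * sin (\<sigma> - \<beta>) + sin (\<sigma> - \<gamma>) * sin (\<sigma> - \<alpha> - \<delta>)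
             + sin (\<sigma> - \<alpha>) * sin (\<sigma> - \<gamma> - \<delta>) - sin (\<sigma> - \<delta>) * sin (\<sigma> - \<alpha> - \<gamma>))
          / (sin \<sigma> * sin (\<sigma> - \<beta>))"
      unfolding qx_qz_qu qy_qz_qu qx_qy_qu using sin_ne_zero by (simp add: field_simps)
    then show ?thesis
      by (simp only: sig_trig_identities(7)) (simp add: field_simps)
  qed
  have rad: "x*y*u*(1+z)*(1+u*z) = (sin \<alpha> * sin \<gamma> / sin (\<sigma> - \<beta>) / sin \<sigma>)^2"
    unfolding qx_qy_qu one_plus_qz one_plus_qu_qz
    using sin_ne_zero by (simp add: field_simps power2_eq_square)
  show ?thesis unfolding num rad eps_def
    by (rule sgn_mult_div_sqrt_square[symmetric]) (use sin_pos sin_sig_diff_pos sin_ne_zero in auto)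
qed

lemma cos_sig_eq:
  "cos \<sigma> = (1 - u*(x*y + x*z + y*z + 2*x*y*z)) / (2 * sqrt (x*y*z*u^2*(1+x)*(1+y)*(1+z)))"
proof -
  define k where "k = sin \<alpha> * sin \<gamma> * sin \<delta> / sin (\<sigma> - \<beta>)"
  have num: "1 - u*(x*y + x*z + y*z + 2*x*y*z) = 2 * cos \<sigma> * k / sin \<sigma> ^ 2"
  proof -
    have "1 - u*(x*y + x*z + y*z + 2*x*y*z) = 1 - x*y*u - x*z*u - y*z*u - 2*(x*y*z*u)"
      by (simp add: algebra_simps)
    also have "\<dots> = (sin \<sigma> * (sin \<sigma> * sin (\<sigma> - \<beta>) + sin (\<sigma> - \<gamma>) * sin (\<sigma> - \<alpha> - \<delta>)
               + sin (\<sigma> - \<alpha>) * sin (\<sigma> - \<gamma> - \<delta>) + sin (\<sigma> - \<delta>) * sin (\<sigma> - \<alpha> - \<gamma>))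
             - 2 * sin (\<sigma> - \<alpha>) * sin (\<sigma> - \<gamma>) * sin (\<sigma> - \<delta>)) / (sin \<sigma> ^ 2 * sin (\<sigma> - \<beta>))"
      unfolding qx_qz_qu qy_qz_qu qx_qy_qu qx_qy_qz_qu
      using sin_ne_zero by (simp add: field_simps power2_eq_square)
    finally show ?thesis
      unfolding k_def by (simp only: sig_trig_identities(8)) (simp add: field_simps)
  qed
  have rad: "x*y*z*u^2*(1+x)*(1+y)*(1+z) = (k / sin \<sigma> ^ 2)^2"
  proof -
    have "x*y*z*u^2*(1+x)*(1+y)*(1+z) = (x*y*z*u) * (u*(1+x)*(1+y)*(1+z))"
      by (simp add: power2_eq_square algebra_simps)
    then show ?thesis
      unfolding qx_qy_qz_qu qu_mult_one_plus k_def
      using sin_ne_zero by (simp add: field_simps power2_eq_square)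
  qed
  have "sgn (sin \<sigma> ^ 2) = 1"
    using sin_ne_zero by (simp add: sgn_if)
  moreover have "0 < k"
    using sin_pos sin_sig_diff_pos by (simp add: k_def)
  ultimately show ?thesis
    using sgn_mult_div_sqrt_square[of k "sin \<sigma> ^ 2" "cos \<sigma>"] sin_ne_zero unfolding num rad by simp
qed

lemma cos_beta_eq:
  "cos \<beta> = e * (u*(1+x)*(1+y)*(1+z) + (1+u*x)*(1+u*y)*(1+u*z) - u*x*y*z*(u-1)^2)
             / (2 * sqrt (u*(1+x)*(1+y)*(1+z)*(1+u*x)*(1+u*y)*(1+u*z)))"
proof -
  define k where "k = (sin \<alpha> * sin \<gamma> * sin \<delta>)^2
      / (sin (\<sigma> - \<beta>) * (sin (\<sigma> - \<alpha>) * sin (\<sigma> - \<beta>) * sin (\<sigma> - \<gamma>) * sin (\<sigma> - \<delta>)))"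
  have num: "u*(1+x)*(1+y)*(1+z) + (1+u*x)*(1+u*y)*(1+u*z) - u*x*y*z*(u-1)^2
      = 2 * cos \<beta> * k / sin \<sigma>"
  proof -
    have "u*x*y*z*(u-1)^2 = (x*y*z*u) * (u-1)^2"
      by (simp add: algebra_simps)
    then have "u*(1+x)*(1+y)*(1+z) + (1+u*x)*(1+u*y)*(1+u*z) - u*x*y*z*(u-1)^2
        = k * (sin \<sigma> ^ 2 + sin (\<sigma> - \<beta>) ^ 2 - sin \<beta> ^ 2) / (sin \<sigma> ^ 2 * sin (\<sigma> - \<beta>))"
      unfolding qu_mult_one_plus one_plus_qu_mult qx_qy_qz_qu qu_sub_one k_def
      using sin_ne_zero by (simp add: field_simps power2_eq_square)
    then show ?thesis
      by (simp only: sin_square_add_sin_square_diff)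
        (use sin_ne_zero in \<open>simp add: field_simps power2_eq_square\<close>)
  qed
  have rad: "u*(1+x)*(1+y)*(1+z)*(1+u*x)*(1+u*y)*(1+u*z) = (k / sin \<sigma>)^2"
  proof -
    have "u*(1+x)*(1+y)*(1+z)*(1+u*x)*(1+u*y)*(1+u*z)
        = (u*(1+x)*(1+y)*(1+z)) * ((1+u*x)*(1+u*y)*(1+u*z))"
      by (simp add: algebra_simps)
    then show ?thesis
      unfolding qu_mult_one_plus one_plus_qu_mult k_def
      using sin_ne_zero by (simp add: field_simps power2_eq_square)
  qed
  have "0 < k"
    using sin_pos sin_sig_diff_pos by (simp add: k_def)
  then show ?thesis unfolding num rad eps_def
    by (intro sgn_mult_div_sqrt_square[symmetric] sin_sig_ne_zero)
qed

end

theorem lemma6: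
  fixes \<alpha> \<beta> \<gamma> \<delta> :: "nat \<Rightarrow> real"
  assumes ang: "\<And>i. i \<in> {1..4} \<Longrightarrow>
      \<alpha> i \<in> {0<..<pi} \<and> \<beta> i \<in> {0<..<pi} \<and> \<gamma> i \<in> {0<..<pi} \<and> \<delta> i \<in> {0<..<pi}"
    and nd: "\<And>i. i \<in> {1..4} \<Longrightarrow> nondeg (\<alpha> i) (\<beta> i) (\<gamma> i) (\<delta> i)"
    and Mpos: "\<And>i. i \<in> {1..4} \<Longrightarrow> qM (\<alpha> i) (\<beta> i) (\<gamma> i) (\<delta> i) > 0"
    and i: "i \<in> {1..4}"
  shows "let e = eps (\<alpha> i) (\<beta> i) (\<gamma> i) (\<delta> i);
             s = sig (\<alpha> i) (\<beta> i) (\<gamma> i) (\<delta> i);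
             x = qx (\<alpha> i) (\<beta> i) (\<gamma> i) (\<delta> i);
             y = qy (\<alpha> i) (\<beta> i) (\<gamma> i) (\<delta> i);
             z = qz (\<alpha> i) (\<beta> i) (\<gamma> i) (\<delta> i);
             u = qu (\<alpha> i) (\<beta> i) (\<gamma> i) (\<delta> i)
         in cos (\<alpha> i) = e * (1 - y*z*u + x*z*u - x*y*u) / (2 * sqrt (x*z*u*(1+y)*(1+u*y)))
          \<and> cos (\<gamma> i) = e * (1 + y*z*u - x*z*u - x*y*u) / (2 * sqrt (y*z*u*(1+x)*(1+u*x)))
          \<and> cos (\<delta> i) = e * (1 - y*z*u - x*z*u + x*y*u) / (2 * sqrt (x*y*u*(1+z)*(1+u*z)))
          \<and> cos s = (1 - u*(x*y + x*z + y*z + 2*x*y*z)) / (2 * sqrt (x*y*z*u^2*(1+x)*(1+y)*(1+z)))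
          \<and> cos (\<beta> i) = e * (u*(1+x)*(1+y)*(1+z) + (1+u*x)*(1+u*y)*(1+u*z) - u*x*y*z*(u-1)^2)
                 / (2 * sqrt (u*(1+x)*(1+y)*(1+z)*(1+u*x)*(1+u*y)*(1+u*z)))"
proof -
  have "\<alpha> i \<in> {0<..<pi}" "\<beta> i \<in> {0<..<pi}" "\<gamma> i \<in> {0<..<pi}" "\<delta> i \<in> {0<..<pi}"
    using ang[OF i] by auto
  then interpret angle_quadruple "\<alpha> i" "\<beta> i" "\<gamma> i" "\<delta> i"
    using qM_pos_imp_sin_sig_diff_pos[OF _ _ _ _ Mpos[OF i]] nondeg_imp_sin_ne_zero[OF nd[OF i]]
    by unfold_locales (auto intro: sin_gt_zero)
  show ?thesis
    unfolding Let_def using cos_alpha_eq cos_gamma_eq cos_delta_eq cos_sig_eq cos_beta_eq by blast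
qed

end
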